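(* Let $\Sigma$ be a complete unimodular fan and $f\in\mathrm{PL}(\Sigma)$. Then there are only finitely many $m\in M$ such that $\sum_{\sigma\in\Sigma_{f,m}}(-1)^{\dim\sigma}\neq0$, where $\Sigma_{f,m}=\{\sigma\in\Sigma\mid m(x)\le f(x)\text{ for all }x\in\sigma\}$.
   Context: $N$ is a free abelian group, $N_\mathbb{R}=N\otimes\mathbb{R}$, $M=\mathrm{Hom}(N,\mathbb{Z})$ viewed as integral linear functions on $N_\mathbb{R}$. A fan is complete if its support is $N_\mathbb{R}$; unimodular if it contains the origin and for each cone the primitive ray generators extend to a $\mathbb{Z}$-basis of $N$. $\mathrm{PL}(\Sigma)$ is the group of functions on $|\Sigma|$ agreeing on each cone with some element of $M$. *)

theory Defs
  imports "HOL-Analysis.Analysis"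
begin

text \<open>The lattice N is modelled as the integer points of real^'n (so N = Z^n, n = CARD('n)),
  N_R = real^'n.  M = Hom(N,Z) is identified with integer vectors m acting by x \<mapsto> m \<bullet> x.\<close>

definition lattice_pt :: "real^'n \<Rightarrow> bool" where
  "lattice_pt v \<longleftrightarrow> (\<forall>i. v $ i \<in> \<int>)"

definition lattice_basis :: "(real^'n) set \<Rightarrow> bool" where
  "lattice_basis B \<longleftrightarrow> finite B \<and> (\<forall>b\<in>B. lattice_pt b) \<and> independent B \<and>
     (\<forall>v. lattice_pt v \<longrightarrow> (\<exists>c. (\<forall>b\<in>B. c b \<in> \<int>) \<and> v = (\<Sum>b\<in>B. c b *\<^sub>R b)))"

definition cone_gen :: "(real^'n) set \<Rightarrow> (real^'n) set" where
  "cone_gen S = {x. \<exists>c. (\<forall>v\<in>S. 0 \<le> c v) \<and> x = (\<Sum>v\<in>S. c v *\<^sub>R v)}"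

text \<open>A unimodular cone: generated by vectors that extend to a Z-basis of N
  (these are then exactly its primitive ray generators).\<close>
definition unimodular_cone :: "(real^'n) set \<Rightarrow> bool" where
  "unimodular_cone \<sigma> \<longleftrightarrow> (\<exists>S B. S \<subseteq> B \<and> lattice_basis B \<and> \<sigma> = cone_gen S)"

definition is_fan :: "(real^'n) set set \<Rightarrow> bool" where
  "is_fan \<Sigma> \<longleftrightarrow> finite \<Sigma> \<and>
     (\<forall>\<sigma>\<in>\<Sigma>. \<exists>S. finite S \<and> (\<forall>v\<in>S. lattice_pt v) \<and> \<sigma> = cone_gen S) \<and>
     (\<forall>\<sigma>\<in>\<Sigma>. \<forall>\<tau>. \<tau> face_of \<sigma> \<and> \<tau> \<noteq> {} \<longrightarrow> \<tau> \<in> \<Sigma>) \<and>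
     (\<forall>\<sigma>\<in>\<Sigma>. \<forall>\<tau>\<in>\<Sigma>. (\<sigma> \<inter> \<tau>) face_of \<sigma> \<and> (\<sigma> \<inter> \<tau>) face_of \<tau>)"

definition complete_fan :: "(real^'n) set set \<Rightarrow> bool" where
  "complete_fan \<Sigma> \<longleftrightarrow> is_fan \<Sigma> \<and> \<Union>\<Sigma> = UNIV"

definition unimodular_fan :: "(real^'n) set set \<Rightarrow> bool" where
  "unimodular_fan \<Sigma> \<longleftrightarrow> is_fan \<Sigma> \<and> {0} \<in> \<Sigma> \<and> (\<forall>\<sigma>\<in>\<Sigma>. unimodular_cone \<sigma>)"

definition PL :: "(real^'n) set set \<Rightarrow> (real^'n \<Rightarrow> real) set" where
  "PL \<Sigma> = {f. \<forall>\<sigma>\<in>\<Sigma>. \<exists>m. lattice_pt m \<and> (\<forall>x\<in>\<sigma>. f x = m \<bullet> x)}"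

definition Sigma_fm :: "(real^'n) set set \<Rightarrow> (real^'n \<Rightarrow> real) \<Rightarrow> real^'n \<Rightarrow> (real^'n) set set" where
  "Sigma_fm \<Sigma> f m = {\<sigma>\<in>\<Sigma>. \<forall>x\<in>\<sigma>. m \<bullet> x \<le> f x}"

end

theory Submission
  imports Defs
begin

text \<open>
  Fix \<open>m\<close> with \<open>|m|\<close> larger than the norms of all linear pieces of \<open>f\<close>, and put \<open>w = -m\<close>.
  For every cone \<open>\<tau>\<close> there is exactly one cone \<open>\<rho>\<close> whose relative interior contains
  \<open>x\<^sub>\<tau> + \<epsilon> w\<close> for small \<open>\<epsilon> > 0\<close>, where \<open>x\<^sub>\<tau>\<close> is the sum of the ray generators of \<open>\<tau>\<close>;
  grouping the cones of \<open>Sigma_fm \<Sigma> f m\<close> by this \<open>\<rho>\<close>, those attached to \<open>\<rho>\<close> are the faces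
  whose generator sets \<open>G\<close> satisfy \<open>R \<subseteq> G \<subseteq> Q\<close>, with \<open>R\<close> the generators of \<open>\<rho>\<close> on which \<open>w\<close>
  has a non-positive coordinate and \<open>Q\<close> those with \<open>m(v) \<le> f(v)\<close>. By unimodularity \<open>dim\<close> is the number
  of generators, so each group contributes an alternating sum over a Boolean interval, which
  vanishes unless \<open>R = Q\<close>. But \<open>R = Q\<close> forces \<open>(m\<^sub>\<rho> - m) \<bullet> w \<le> 0\<close> for the linear piece \<open>m\<^sub>\<rho>\<close> of \<open>f\<close>
  on \<open>\<rho>\<close>, i.e. \<open>|m|\<^sup>2 \<le> m\<^sub>\<rho> \<bullet> m\<close>, contradicting the choice of \<open>m\<close>. Hence only lattice points in a
  bounded ball contribute.
\<close>

section \<open>Finitely generated cones\<close>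

lemma convex_cone_sum:
  assumes "convex_cone C" "\<And>a. a \<in> A \<Longrightarrow> g a \<in> C"
  shows "sum g A \<in> C"
proof (cases "finite A")
  case True
  then show ?thesis
    using assms(2)
    by (induction A rule: finite_induct)
       (simp_all add: convex_cone_contains_0[OF assms(1)] convex_cone_add[OF assms(1)])
qed (simp add: convex_cone_contains_0[OF assms(1)])

lemma cone_gen_subset_convex_cone:
  assumes "convex_cone C" "S \<subseteq> C"
  shows "cone_gen S \<subseteq> C"
  using assms convex_cone_scaleR[OF assms(1)]
  by (auto simp: cone_gen_def intro!: convex_cone_sum)

lemma convex_cone_cone_gen: "convex_cone (cone_gen S)"
  unfolding convex_cone_iff
proof (intro conjI ballI allI impI)
  show "0 \<in> cone_gen S"
    unfolding cone_gen_def by (auto intro!: exI[of _ "\<lambda>_. 0"])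
next
  fix x y assume "x \<in> cone_gen S" "y \<in> cone_gen S"
  then obtain c d where "\<forall>v\<in>S. 0 \<le> c v" "x = (\<Sum>v\<in>S. c v *\<^sub>R v)"
    and "\<forall>v\<in>S. 0 \<le> d v" "y = (\<Sum>v\<in>S. d v *\<^sub>R v)"
    unfolding cone_gen_def by blast
  then show "x + y \<in> cone_gen S"
    unfolding cone_gen_def
    by (intro CollectI exI[of _ "\<lambda>v. c v + d v"]) (simp add: scaleR_add_left sum.distrib)
next
  fix x and t :: real assume "x \<in> cone_gen S" "0 \<le> t"
  then obtain d where "\<forall>v\<in>S. 0 \<le> d v" "x = (\<Sum>v\<in>S. d v *\<^sub>R v)"
    unfolding cone_gen_def by blast
  with \<open>0 \<le> t\<close> show "t *\<^sub>R x \<in> cone_gen S"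
    unfolding cone_gen_def
    by (intro CollectI exI[of _ "\<lambda>v. t * d v"]) (simp add: scaleR_sum_right)
qed

lemma convex_cone_gen: "convex (cone_gen S)"
  and conic_cone_gen: "conic (cone_gen S)"
  and zero_in_cone_gen: "0 \<in> cone_gen S"
  using convex_cone_cone_gen[of S] convex_cone_contains_0 unfolding convex_cone_def by blast+

lemma positive_combination_in_cone_gen:
  "\<forall>v\<in>S. 0 \<le> c v \<Longrightarrow> (\<Sum>v\<in>S. c v *\<^sub>R v) \<in> cone_gen S"
  unfolding cone_gen_def by blast

lemma generator_in_cone_gen:
  assumes "finite S" "v \<in> S"
  shows "v \<in> cone_gen S"
proof -
  have "(\<Sum>u\<in>S. (if u = v then 1 else 0) *\<^sub>R u) = (\<Sum>u\<in>S. if u = v then u else 0)"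
    by (rule sum.cong) auto
  then have "(\<Sum>u\<in>S. (if u = v then 1 else 0) *\<^sub>R u) = v"
    using assms by simp
  then show ?thesis
    using positive_combination_in_cone_gen[of S "\<lambda>u. if u = v then 1 else 0"] by simp
qed

lemma cone_gen_mono:
  assumes "finite G" "G \<subseteq> cone_gen P"
  shows "cone_gen G \<subseteq> cone_gen P"
  using cone_gen_subset_convex_cone[OF convex_cone_cone_gen assms(2)] .

lemma cone_gen_eq_convex_cone_hull:
  assumes "finite S"
  shows "cone_gen S = convex_cone hull S"
proof
  show "cone_gen S \<subseteq> convex_cone hull S"
    by (rule cone_gen_subset_convex_cone[OF convex_cone_convex_cone_hull hull_subset])
  show "convex_cone hull S \<subseteq> cone_gen S"
    by (rule hull_minimal) (use generator_in_cone_gen[OF assms] convex_cone_cone_gen in auto)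
qed

lemma closed_cone_gen:
  fixes S :: "(real^'n) set"
  shows "finite S \<Longrightarrow> closed (cone_gen S)"
  by (simp add: cone_gen_eq_convex_cone_hull closed_convex_cone_hull)

lemma cone_gen_subset_span: "cone_gen S \<subseteq> span S"
  by (auto simp: cone_gen_def span_sum span_scale span_base)

lemma independent_coefficients_unique:
  fixes P :: "(real^'n) set"
  assumes "independent P" "(\<Sum>v\<in>P. c v *\<^sub>R v) = (\<Sum>v\<in>P. d v *\<^sub>R v)" "u \<in> P"
  shows "c u = d u"
proof -
  have "(\<Sum>v\<in>P. (c v - d v) *\<^sub>R v) = 0"
    using assms(2) by (simp add: scaleR_diff_left sum_subtractf)
  moreover have H: "\<forall>c. (\<Sum>v\<in>P. c v *\<^sub>R v) = 0 \<longrightarrow> (\<forall>v\<in>P. c v = 0)"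
    using assms(1) independent_explicit by blast
  ultimately have "c u - d u = 0"
    using assms(3) spec[OF H, of "\<lambda>v. c v - d v"] by blast
  then show ?thesis by simp
qed

lemma representation_combination:
  fixes P :: "(real^'n) set"
  assumes "independent P" "v \<in> P"
  shows "representation P (\<Sum>u\<in>P. d u *\<^sub>R u) v = d v"
proof -
  let ?w = "\<Sum>u\<in>P. d u *\<^sub>R u"
  have "finite P" using assms(1) independent_explicit by blast
  moreover have "?w \<in> span P" by (simp add: span_sum span_scale span_base)
  ultimately have "(\<Sum>u\<in>P. representation P ?w u *\<^sub>R u) = ?w"
    using sum_representation_eq[OF assms(1)] by blast
  then show ?thesis
    by (rule independent_coefficients_unique[OF assms(1) _ assms(2)])
qed

lemma sum_scaleR_indicator_extend:
  fixes S :: "(real^'n) set"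
  assumes "finite S" "P \<subseteq> S"
  shows "(\<Sum>v\<in>P. c v *\<^sub>R v) = (\<Sum>v\<in>S. (if v \<in> P then c v else 0) *\<^sub>R v)"
proof -
  have "(\<Sum>v\<in>S. (if v \<in> P then c v else 0) *\<^sub>R v) = (\<Sum>v\<in>P. (if v \<in> P then c v else 0) *\<^sub>R v)"
    by (rule sum.mono_neutral_right) (use assms in auto)
  then show ?thesis by simp
qed

lemma face_of_cone_gen_subset:
  fixes S :: "(real^'n) set"
  assumes ind: "independent S" and PS: "P \<subseteq> S"
  shows "cone_gen P face_of cone_gen S"
proof -
  have fS: "finite S" using ind independent_explicit by blast
  have fP: "finite P" using fS PS finite_subset by blast
  have endpoint: "a \<in> cone_gen P"
    if a: "a \<in> cone_gen S" and b: "b \<in> cone_gen S" and "x \<in> cone_gen P"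
      and u: "0 < u" "u < 1" and x: "x = (1 - u) *\<^sub>R a + u *\<^sub>R b" for a b x u
  proof -
    obtain \<alpha> where \<alpha>: "\<forall>v\<in>S. 0 \<le> \<alpha> v" "a = (\<Sum>v\<in>S. \<alpha> v *\<^sub>R v)"
      using a unfolding cone_gen_def by blast
    obtain \<beta> where \<beta>: "\<forall>v\<in>S. 0 \<le> \<beta> v" "b = (\<Sum>v\<in>S. \<beta> v *\<^sub>R v)"
      using b unfolding cone_gen_def by blast
    obtain \<gamma> where \<gamma>: "x = (\<Sum>v\<in>P. \<gamma> v *\<^sub>R v)"
      using \<open>x \<in> cone_gen P\<close> unfolding cone_gen_def by blast
    have E: "(\<Sum>v\<in>S. (if v \<in> P then \<gamma> v else 0) *\<^sub>R v) = (\<Sum>v\<in>S. ((1 - u) * \<alpha> v + u * \<beta> v) *\<^sub>R v)"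
      using x \<alpha>(2) \<beta>(2) \<gamma> sum_scaleR_indicator_extend[OF fS PS, of \<gamma>]
      by (simp add: scaleR_add_left sum.distrib scaleR_sum_right)
    have "\<alpha> v = 0" if v: "v \<in> S - P" for v
    proof -
      have "(1 - u) * \<alpha> v + u * \<beta> v = 0"
        using independent_coefficients_unique[OF ind E, of v] v by simp
      moreover have "0 \<le> (1 - u) * \<alpha> v" "0 \<le> u * \<beta> v"
        using \<alpha>(1) \<beta>(1) u v by auto
      ultimately have "(1 - u) * \<alpha> v = 0" by linarith
      then show ?thesis using u by simp
    qed
    then have "a = (\<Sum>v\<in>P. \<alpha> v *\<^sub>R v)"
      unfolding \<alpha>(2) by (intro sum.mono_neutral_right fS PS) auto
    then show ?thesis
      using \<alpha>(1) PS positive_combination_in_cone_gen[of P \<alpha>] by auto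
  qed
  show ?thesis
    unfolding face_of_def
  proof (intro conjI cone_gen_mono[OF fP] convex_cone_gen ballI impI)
    show "P \<subseteq> cone_gen S" using PS generator_in_cone_gen[OF fS] by blast
    fix a b x assume ab: "a \<in> cone_gen S" "b \<in> cone_gen S" and x: "x \<in> cone_gen P"
      and "x \<in> open_segment a b"
    then obtain u where u: "0 < u" "u < 1" "x = (1 - u) *\<^sub>R a + u *\<^sub>R b"
      unfolding in_segment by blast
    show "a \<in> cone_gen P"
      by (rule endpoint[OF ab x u])
    show "b \<in> cone_gen P"
      by (rule endpoint[OF ab(2,1) x, of "1 - u"]) (use u in \<open>auto simp: algebra_simps\<close>)
  qed
qed

lemma generator_in_face:
  fixes P :: "(real^'n) set"
  assumes ind: "independent P" and F: "F face_of cone_gen P"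
    and "(\<Sum>v\<in>P. c v *\<^sub>R v) \<in> F" and c: "\<forall>v\<in>P. 0 \<le> c v" and u: "u \<in> P" "0 < c u"
  shows "u \<in> F"
proof -
  have fP: "finite P" using ind independent_explicit by blast
  \<comment> \<open>the point is the midpoint of \<open>2 a\<close> and \<open>2 c\<^sub>u u\<close>, both in the cone\<close>
  define a where "a = (\<Sum>v\<in>P-{u}. c v *\<^sub>R v)"
  define p where "p = 2 *\<^sub>R a"
  define q where "q = (2 * c u) *\<^sub>R u"
  have "a \<in> cone_gen P"
    using positive_combination_in_cone_gen[of "P - {u}" c] c
      cone_gen_mono[of "P - {u}" P] fP generator_in_cone_gen[OF fP]
    unfolding a_def by blast
  then have p: "p \<in> cone_gen P"
    unfolding p_def using conic_cone_gen conicD by fastforce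
  have q: "q \<in> cone_gen P"
    unfolding q_def using conic_cone_gen generator_in_cone_gen[OF fP u(1)] conicD u(2) by fastforce
  have mid: "(\<Sum>v\<in>P. c v *\<^sub>R v) = (1 - 1/2) *\<^sub>R p + (1/2) *\<^sub>R q"
    unfolding p_def q_def a_def using fP u(1) by (simp add: sum.remove algebra_simps)
  have "q \<in> F"
  proof (cases "p = q")
    case True
    then show ?thesis using mid \<open>(\<Sum>v\<in>P. c v *\<^sub>R v) \<in> F\<close> by (simp flip: scaleR_left_distrib)
  next
    case False
    then have "(\<Sum>v\<in>P. c v *\<^sub>R v) \<in> open_segment p q"
      unfolding in_segment mid by (intro conjI exI[of _ "1/2"]) auto
    then show ?thesis using F p q \<open>(\<Sum>v\<in>P. c v *\<^sub>R v) \<in> F\<close> unfolding face_of_def by blast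
  qed
  moreover have "u = (1 / (2 * c u)) *\<^sub>R q"
    unfolding q_def using u(2) by simp
  ultimately show ?thesis
    using conicD[OF face_of_conic[OF conic_cone_gen F], of q "1 / (2 * c u)"] u(2) by simp
qed

lemma dim_cone_gen:
  fixes G :: "(real^'n) set"
  assumes "independent G"
  shows "dim (cone_gen G) = card G"
proof -
  have "finite G" using assms independent_explicit by blast
  then have "span (cone_gen G) = span G"
    using cone_gen_subset_span[of G] generator_in_cone_gen[of G]
    by (metis span_mono span_span subsetI subset_antisym)
  then show ?thesis
    by (metis assms dim_span dim_span_eq_card_independent)
qed

section \<open>Unimodular cones\<close>

lemma lattice_basis_coeff_int:
  assumes B: "lattice_basis B" and v: "lattice_pt v" and u: "u \<in> B" and vu: "v = r *\<^sub>R u"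
  shows "r \<in> \<int>"
proof -
  obtain c where c: "\<forall>b\<in>B. c b \<in> \<int>" "v = (\<Sum>b\<in>B. c b *\<^sub>R b)"
    using B v unfolding lattice_basis_def by blast
  have fB: "finite B" and iB: "independent B"
    using B unfolding lattice_basis_def by auto
  have "(\<Sum>b\<in>B. c b *\<^sub>R b) = (\<Sum>b\<in>B. (if b \<in> {u} then r else 0) *\<^sub>R b)"
    using sum_scaleR_indicator_extend[OF fB, of "{u}" "\<lambda>_. r"] u c(2) vu by simp
  then have "c u = (if u \<in> {u} then r else 0)"
    by (rule independent_coefficients_unique[OF iB _ u])
  then have "c u = r" by simp
  with c(1) u show ?thesis by blast
qed

lemma lattice_basis_positive_multiple:
  assumes B1: "lattice_basis B1" and B2: "lattice_basis B2" and s: "s \<in> B1" and u: "u \<in> B2"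
    and us: "u = t *\<^sub>R s" and t: "0 < t"
  shows "t = 1"
proof -
  have "lattice_pt s" "lattice_pt u"
    using B1 B2 s u unfolding lattice_basis_def by auto
  moreover have "s = (1 / t) *\<^sub>R u"
    using us t by simp
  ultimately have "t \<in> \<int>" "1 / t \<in> \<int>"
    using lattice_basis_coeff_int[OF B1 _ s us] lattice_basis_coeff_int[OF B2 _ u] by blast+
  then obtain k l where k: "t = of_int k" and l: "1 / t = of_int l"
    by (metis Ints_cases)
  have "real_of_int k \<noteq> 0" using k t by simp
  then have "of_int (k * l) = (1::real)"
    using k l by (simp add: field_simps)
  then have "k * l = 1"
    by (metis of_int_eq_1_iff)
  moreover have "0 < k" using k t by simp
  ultimately show ?thesis
    using k pos_zmult_eq_1_iff by fastforce
qed

lemma ray_face_in_generators: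
  assumes B1: "lattice_basis B1" and B2: "lattice_basis B2" and S1: "S1 \<subseteq> B1" and S2: "S2 \<subseteq> B2"
    and s: "s \<in> S1" and F: "cone_gen {s} face_of cone_gen S2"
  shows "s \<in> S2"
proof -
  have i1: "independent S1" and i2: "independent S2"
    using B1 B2 S1 S2 independent_mono unfolding lattice_basis_def by blast+
  have "s \<in> cone_gen S2"
    using F face_of_imp_subset generator_in_cone_gen[of "{s}" s] by blast
  then obtain c where c: "\<forall>v\<in>S2. 0 \<le> c v" "s = (\<Sum>v\<in>S2. c v *\<^sub>R v)"
    unfolding cone_gen_def by blast
  have "s \<noteq> 0" using i1 s dependent_zero by blast
  then obtain u where u: "u \<in> S2" "c u \<noteq> 0"
    using c(2) by (metis (no_types, lifting) scale_eq_0_iff sum.neutral)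
  with c(1) have "0 < c u" by force
  then have "u \<in> cone_gen {s}"
    using generator_in_face[OF i2 F _ c(1) u(1)] c(2) generator_in_cone_gen[of "{s}" s] by simp
  then obtain t where t: "0 \<le> t" "u = t *\<^sub>R s"
    unfolding cone_gen_def by auto
  moreover have "u \<noteq> 0" using i2 u(1) dependent_zero by blast
  ultimately have "t = 1"
    using lattice_basis_positive_multiple[OF B1 B2 _ _ t(2)] s S1 u(1) S2 by fastforce
  then show ?thesis using t(2) u(1) by simp
qed

lemma unimodular_generators_unique:
  assumes B1: "lattice_basis B1" and B2: "lattice_basis B2" and S1: "S1 \<subseteq> B1" and S2: "S2 \<subseteq> B2"
    and eq: "cone_gen S1 = cone_gen S2"
  shows "S1 = S2"
proof -
  have ind: "independent S1" "independent S2"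
    using B1 B2 S1 S2 independent_mono unfolding lattice_basis_def by blast+
  have "S1 \<subseteq> S2"
    using ray_face_in_generators[OF B1 B2 S1 S2] face_of_cone_gen_subset[OF ind(1), of "{_}"] eq
    by auto
  moreover have "S2 \<subseteq> S1"
    using ray_face_in_generators[OF B2 B1 S2 S1] face_of_cone_gen_subset[OF ind(2), of "{_}"] eq
    by auto
  ultimately show ?thesis by blast
qed

text \<open>By \<open>unimodular_generators_unique\<close> this is the set of primitive ray generators of a
  unimodular cone; on other sets its value is unspecified.\<close>

definition ray_generators :: "(real^'n) set \<Rightarrow> (real^'n) set" where
  "ray_generators \<sigma> = (SOME S. \<exists>B. S \<subseteq> B \<and> lattice_basis B \<and> \<sigma> = cone_gen S)"

lemma ray_generators:
  assumes "unimodular_cone \<sigma>"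
  shows "\<exists>B. ray_generators \<sigma> \<subseteq> B \<and> lattice_basis B \<and> \<sigma> = cone_gen (ray_generators \<sigma>)"
  using someI_ex[OF assms[unfolded unimodular_cone_def]] unfolding ray_generators_def .

lemma ray_generators_cone_gen:
  assumes "S \<subseteq> B" "lattice_basis B"
  shows "ray_generators (cone_gen S) = S"
proof -
  have "unimodular_cone (cone_gen S)"
    unfolding unimodular_cone_def using assms by blast
  then show ?thesis
    using ray_generators unimodular_generators_unique[OF _ assms(2) _ assms(1)] by metis
qed

section \<open>Counting and finiteness\<close>

lemma sum_alternating_subsets_between:
  assumes "finite Q" "R \<noteq> Q"
  shows "(\<Sum>G | R \<subseteq> G \<and> G \<subseteq> Q. (-1::int) ^ card G) = 0"
proof (cases "R \<subseteq> Q")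
  case True
  have "finite {G. R \<subseteq> G \<and> G \<subseteq> Q}"
    by (rule finite_subset[of _ "Pow Q"]) (use assms(1) in auto)
  moreover have "card {G \<in> {G. R \<subseteq> G \<and> G \<subseteq> Q}. even (card G)}
      = card {G \<in> {G. R \<subseteq> G \<and> G \<subseteq> Q}. odd (card G)}"
  proof -
    have interval: "{G \<in> {G. R \<subseteq> G \<and> G \<subseteq> Q}. P (card G)} = {G. G \<subseteq> Q \<and> R \<subseteq> G \<and> P (card G)}"
      for P :: "nat \<Rightarrow> bool"
      by blast
    have "R \<subset> Q" using True assms(2) by blast
    then show ?thesis
      unfolding interval[of even] interval[of odd] by (rule card_subsupersets_even_odd[OF assms(1)])
  qed
  ultimately show ?thesis
    by (rule sum_alternating_cancels)
next
  case False
  then have "{G. R \<subseteq> G \<and> G \<subseteq> Q} = {}" by blast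
  then show ?thesis by (simp only: sum.empty)
qed

lemma sum_group_unique:
  assumes "finite S" "finite T" "\<forall>x\<in>S. \<exists>!y. y \<in> T \<and> r x y"
  shows "(\<Sum>y\<in>T. sum h {x \<in> S. r x y}) = sum h S"
proof -
  define g where "g x = (THE y. y \<in> T \<and> r x y)" for x
  have g: "g x \<in> T \<and> r x (g x)" if "x \<in> S" for x
  proof -
    have "\<exists>!y. y \<in> T \<and> r x y" using assms(3) that by blast
    then show ?thesis unfolding g_def by (rule theI')
  qed
  have "{x \<in> S. r x y} = {x \<in> S. g x = y}" if "y \<in> T" for y
    using g assms(3) that by blast
  then have "(\<Sum>y\<in>T. sum h {x \<in> S. r x y}) = (\<Sum>y\<in>T. sum h {x \<in> S. g x = y})"
    by (intro sum.cong) simp_all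
  also have "\<dots> = sum h S"
    using g by (intro sum.group assms(1,2)) blast
  finally show ?thesis .
qed

lemma finite_lattice_points_norm_le: "finite {m :: real^'n. lattice_pt m \<and> norm m \<le> K}"
proof (rule finite_subset)
  show "{m :: real^'n. lattice_pt m \<and> norm m \<le> K} \<subseteq> vec_lambda ` (PiE UNIV (\<lambda>_. {k \<in> \<int>. \<bar>k\<bar> \<le> K}))"
  proof
    fix m :: "real^'n" assume m: "m \<in> {m. lattice_pt m \<and> norm m \<le> K}"
    have "m $ i \<in> {k \<in> \<int>. \<bar>k\<bar> \<le> K}" for i
      using m component_le_norm_cart[of m i] unfolding lattice_pt_def by force
    then have "vec_nth m \<in> PiE UNIV (\<lambda>_. {k \<in> \<int>. \<bar>k\<bar> \<le> K})"
      by auto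
    then show "m \<in> vec_lambda ` (PiE UNIV (\<lambda>_. {k \<in> \<int>. \<bar>k\<bar> \<le> K}))"
      by (rule rev_image_eqI) simp
  qed
qed (simp add: finite_PiE finite_abs_int_segment)

section \<open>Moving off a cone in a fixed direction\<close>

lemma closed_cover_initial_segment:
  fixes x w :: "'a::real_normed_vector"
  assumes "finite \<C>" "\<forall>C\<in>\<C>. closed C" "\<Union>\<C> = UNIV"
  shows "\<exists>C\<in>\<C>. \<exists>\<delta>>0. x \<in> C \<and> x + \<delta> *\<^sub>R w \<in> C"
proof -
  define U where "U = \<Union>{C\<in>\<C>. x \<notin> C}"
  have "open (- U)" "x \<in> - U"
    using assms(1,2) unfolding U_def by (auto intro!: closed_Union)
  then obtain e where e: "0 < e" "ball x e \<subseteq> - U"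
    using open_contains_ball by blast
  define \<delta> where "\<delta> = e / (norm w + 1)"
  have "0 < \<delta>" using e(1) unfolding \<delta>_def by (simp add: add_nonneg_pos)
  have "norm (\<delta> *\<^sub>R w) = e * (norm w / (norm w + 1))"
    using e(1) unfolding \<delta>_def by simp
  also have "\<dots> < e * 1"
    using e(1) by (intro mult_strict_left_mono) (simp_all add: add_nonneg_pos)
  finally have "norm (\<delta> *\<^sub>R w) < e" by simp
  then have "x + \<delta> *\<^sub>R w \<in> ball x e"
    by (simp add: dist_norm)
  then have "x + \<delta> *\<^sub>R w \<notin> U"
    using e(2) by blast
  moreover obtain C where "C \<in> \<C>" "x + \<delta> *\<^sub>R w \<in> C"
    using assms(3) by blast
  ultimately show ?thesis
    using \<open>0 < \<delta>\<close> unfolding U_def by blast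
qed

text \<open>For small \<open>\<epsilon> > 0\<close> the coordinates of \<open>(\<Sum>v\<in>ray_generators \<tau>. v) + \<epsilon> w\<close> in the ray generators
  of \<open>\<rho>\<close> are \<open>[v \<in> ray_generators \<tau>] + \<epsilon> c\<^sub>v\<close>, where \<open>c\<close> are the coordinates of \<open>w\<close>; they are all
  positive exactly when \<open>moves_into w \<tau> \<rho>\<close> holds. So \<open>\<rho>\<close> is the cone whose relative interior one
  enters when moving from the relative interior of \<open>\<tau>\<close> in direction \<open>w\<close>.\<close>

definition nonpos_generators :: "real^'n \<Rightarrow> (real^'n) set \<Rightarrow> (real^'n) set" where
  "nonpos_generators w \<rho> = {v \<in> ray_generators \<rho>. representation (ray_generators \<rho>) w v \<le> 0}"

definition moves_into :: "real^'n \<Rightarrow> (real^'n) set \<Rightarrow> (real^'n) set \<Rightarrow> bool" where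
  "moves_into w \<tau> \<rho> \<longleftrightarrow> ray_generators \<tau> \<subseteq> ray_generators \<rho> \<and> w \<in> span (ray_generators \<rho>) \<and>
     nonpos_generators w \<rho> \<subseteq> ray_generators \<tau>"

lemma moves_into_positive_coordinates:
  assumes ind: "independent (ray_generators \<rho>)" and mv: "moves_into w \<tau> \<rho>" and e: "0 < e"
    and small: "\<forall>v\<in>ray_generators \<rho>. e * \<bar>representation (ray_generators \<rho>) w v\<bar> < 1"
  shows "\<exists>d. (\<Sum>v\<in>ray_generators \<tau>. v) + e *\<^sub>R w = (\<Sum>v\<in>ray_generators \<rho>. d v *\<^sub>R v)
            \<and> (\<forall>v\<in>ray_generators \<rho>. 0 < d v)"
proof -
  let ?P = "ray_generators \<rho>" and ?G = "ray_generators \<tau>" and ?c = "representation (ray_generators \<rho>) w"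
  have fP: "finite ?P" using ind independent_explicit by blast
  have GP: "?G \<subseteq> ?P" using mv unfolding moves_into_def by blast
  have w: "w = (\<Sum>v\<in>?P. ?c v *\<^sub>R v)"
    using sum_representation_eq[OF ind _ fP] mv unfolding moves_into_def by simp
  define d where "d v = (if v \<in> ?G then 1 else 0) + e * ?c v" for v
  have "(\<Sum>v\<in>?G. v) + e *\<^sub>R w = (\<Sum>v\<in>?P. d v *\<^sub>R v)"
    using sum_scaleR_indicator_extend[OF fP GP, of "\<lambda>_. 1"] unfolding d_def
    by (subst w) (simp add: scaleR_add_left sum.distrib scaleR_sum_right)
  moreover have "0 < d v" if v: "v \<in> ?P" for v
  proof (cases "v \<in> ?G")
    case True
    have "- (e * ?c v) \<le> e * \<bar>?c v\<bar>" using e by (simp add: abs_if)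
    then show ?thesis using small v True unfolding d_def by fastforce
  next
    case False
    then have "0 < ?c v" using mv v unfolding moves_into_def nonpos_generators_def by force
    then show ?thesis using False e unfolding d_def by simp
  qed
  ultimately show ?thesis by blast
qed

lemma nonpos_coordinates_ne_lower_generators:
  fixes P :: "(real^'n) set"
  assumes ind: "independent P" and span: "- m \<in> span P" and norm: "norm m' < norm m"
  shows "{v \<in> P. representation P (- m) v \<le> 0} \<noteq> {v \<in> P. m \<bullet> v \<le> m' \<bullet> v}"
proof
  assume eq: "{v \<in> P. representation P (- m) v \<le> 0} = {v \<in> P. m \<bullet> v \<le> m' \<bullet> v}"
  let ?c = "representation P (- m)"
  have fP: "finite P" using ind independent_explicit by blast
  have "(m' - m) \<bullet> (- m) = (m' - m) \<bullet> (\<Sum>v\<in>P. ?c v *\<^sub>R v)"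
    using sum_representation_eq[OF ind span fP] by simp
  also have "\<dots> = (\<Sum>v\<in>P. ?c v * ((m' - m) \<bullet> v))"
    by (simp add: inner_sum_right)
  also have "\<dots> \<le> 0"
  proof (rule sum_nonpos)
    fix v assume v: "v \<in> P"
    show "?c v * ((m' - m) \<bullet> v) \<le> 0"
    proof (cases "m \<bullet> v \<le> m' \<bullet> v")
      case True
      then have "?c v \<le> 0" using eq v by blast
      moreover have "0 \<le> (m' - m) \<bullet> v" using True by (simp add: inner_diff_left)
      ultimately show ?thesis by (simp add: mult_nonpos_nonneg)
    next
      case False
      then have "0 < ?c v" using eq v by force
      moreover have "(m' - m) \<bullet> v < 0" using False by (simp add: inner_diff_left)
      ultimately show ?thesis by (simp add: mult_pos_neg less_imp_le)
    qed
  qed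
  finally have "m \<bullet> m \<le> m' \<bullet> m" by (simp add: inner_diff_left)
  also have "\<dots> \<le> norm m' * norm m" by (rule norm_cauchy_schwarz)
  finally have "norm m * norm m \<le> norm m' * norm m" by (simp add: dot_square_norm power2_eq_square)
  moreover have "0 < norm m" using norm norm_ge_zero[of m'] by linarith
  ultimately show False using norm by simp
qed

section \<open>Complete unimodular fans\<close>

locale unimodular_complete_fan =
  fixes \<Sigma> :: "(real^'n) set set"
  assumes complete: "complete_fan \<Sigma>" and unimodular: "unimodular_fan \<Sigma>"
begin

lemma is_fan: "is_fan \<Sigma>"
  using complete unfolding complete_fan_def by blast

lemma finite_fan: "finite \<Sigma>"
  using is_fan unfolding is_fan_def by blast

lemma Union_fan: "\<Union>\<Sigma> = UNIV"
  using complete unfolding complete_fan_def by blast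

lemma face_in_fan: "\<sigma> \<in> \<Sigma> \<Longrightarrow> \<tau> face_of \<sigma> \<Longrightarrow> \<tau> \<noteq> {} \<Longrightarrow> \<tau> \<in> \<Sigma>"
  using is_fan unfolding is_fan_def by blast

lemma inter_face_of:
  assumes "\<sigma> \<in> \<Sigma>" "\<tau> \<in> \<Sigma>"
  shows "(\<sigma> \<inter> \<tau>) face_of \<sigma>" "(\<sigma> \<inter> \<tau>) face_of \<tau>"
  using is_fan assms unfolding is_fan_def by blast+

lemma ray_generators_fan:
  assumes "\<sigma> \<in> \<Sigma>"
  shows "\<exists>B. ray_generators \<sigma> \<subseteq> B \<and> lattice_basis B" "cone_gen (ray_generators \<sigma>) = \<sigma>"
proof -
  have "unimodular_cone \<sigma>" using unimodular assms unfolding unimodular_fan_def by blast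
  from ray_generators[OF this]
  show "\<exists>B. ray_generators \<sigma> \<subseteq> B \<and> lattice_basis B" "cone_gen (ray_generators \<sigma>) = \<sigma>"
    by auto
qed

lemma independent_ray_generators: "\<sigma> \<in> \<Sigma> \<Longrightarrow> independent (ray_generators \<sigma>)"
  using ray_generators_fan(1) independent_mono unfolding lattice_basis_def by blast

lemma finite_ray_generators: "\<sigma> \<in> \<Sigma> \<Longrightarrow> finite (ray_generators \<sigma>)"
  using independent_ray_generators independent_explicit by blast

lemma ray_generators_subset: "\<sigma> \<in> \<Sigma> \<Longrightarrow> ray_generators \<sigma> \<subseteq> \<sigma>"
  using generator_in_cone_gen[OF finite_ray_generators] ray_generators_fan(2) by blast

lemma dim_fan_cone: "\<sigma> \<in> \<Sigma> \<Longrightarrow> dim \<sigma> = card (ray_generators \<sigma>)"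
  using dim_cone_gen[OF independent_ray_generators] ray_generators_fan(2) by simp

lemma cone_gen_subset_ray_generators:
  assumes "\<sigma> \<in> \<Sigma>" "G \<subseteq> ray_generators \<sigma>"
  shows "cone_gen G \<in> \<Sigma>" "ray_generators (cone_gen G) = G"
proof -
  have "cone_gen G face_of \<sigma>"
    using face_of_cone_gen_subset[OF independent_ray_generators[OF assms(1)] assms(2)]
      ray_generators_fan(2)[OF assms(1)] by simp
  then show "cone_gen G \<in> \<Sigma>"
    using face_in_fan[OF assms(1)] zero_in_cone_gen by blast
  show "ray_generators (cone_gen G) = G"
    using ray_generators_fan(1)[OF assms(1)] assms(2) ray_generators_cone_gen by blast
qed

lemma fan_cone_subset_if_positive_combination:
  assumes \<rho>1: "\<rho>1 \<in> \<Sigma>" and \<rho>2: "\<rho>2 \<in> \<Sigma>"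
    and y: "(\<Sum>v\<in>ray_generators \<rho>1. d v *\<^sub>R v) \<in> \<rho>2" and d: "\<forall>v\<in>ray_generators \<rho>1. 0 < d v"
  shows "\<rho>1 \<subseteq> \<rho>2"
proof -
  let ?P = "ray_generators \<rho>1"
  have "(\<Sum>v\<in>?P. d v *\<^sub>R v) \<in> \<rho>1"
    using positive_combination_in_cone_gen[of ?P d] d ray_generators_fan(2)[OF \<rho>1] by force
  moreover have "(\<rho>1 \<inter> \<rho>2) face_of cone_gen ?P"
    using inter_face_of(1)[OF \<rho>1 \<rho>2] ray_generators_fan(2)[OF \<rho>1] by simp
  ultimately have "?P \<subseteq> \<rho>1 \<inter> \<rho>2"
    using generator_in_face[OF independent_ray_generators[OF \<rho>1], of "\<rho>1 \<inter> \<rho>2" d] y d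
    by (simp add: less_imp_le subset_iff)
  then show ?thesis
    using cone_gen_mono[OF finite_ray_generators[OF \<rho>1], of "ray_generators \<rho>2"]
      ray_generators_fan(2)[OF \<rho>1] ray_generators_fan(2)[OF \<rho>2] by auto
qed

lemma ray_generators_mono:
  assumes \<tau>: "\<tau> \<in> \<Sigma>" and \<rho>: "\<rho> \<in> \<Sigma>" and "\<tau> \<subseteq> \<rho>"
  shows "ray_generators \<tau> \<subseteq> ray_generators \<rho>"
proof
  fix g assume g: "g \<in> ray_generators \<tau>"
  obtain B\<tau> B\<rho> where B: "ray_generators \<tau> \<subseteq> B\<tau>" "lattice_basis B\<tau>"
    "ray_generators \<rho> \<subseteq> B\<rho>" "lattice_basis B\<rho>"
    using ray_generators_fan(1)[OF \<tau>] ray_generators_fan(1)[OF \<rho>] by blast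
  have "\<tau> face_of \<rho>"
    using inter_face_of(2)[OF \<tau> \<rho>] \<open>\<tau> \<subseteq> \<rho>\<close> by (simp add: Int_absorb2)
  moreover have "cone_gen {g} face_of \<tau>"
    using face_of_cone_gen_subset[OF independent_ray_generators[OF \<tau>], of "{g}"] g
      ray_generators_fan(2)[OF \<tau>] by simp
  ultimately have "cone_gen {g} face_of cone_gen (ray_generators \<rho>)"
    using face_of_trans ray_generators_fan(2)[OF \<rho>] by simp
  then show "g \<in> ray_generators \<rho>"
    by (rule ray_face_in_generators[OF B(2,4,1,3) g])
qed

lemma Sigma_fm_iff:
  assumes "f \<in> PL \<Sigma>"
  shows "\<sigma> \<in> Sigma_fm \<Sigma> f m \<longleftrightarrow> \<sigma> \<in> \<Sigma> \<and> (\<forall>v\<in>ray_generators \<sigma>. m \<bullet> v \<le> f v)"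
proof (cases "\<sigma> \<in> \<Sigma>")
  case True
  obtain m\<sigma> where m\<sigma>: "\<forall>x\<in>\<sigma>. f x = m\<sigma> \<bullet> x"
    using assms True unfolding PL_def by blast
  have "m \<bullet> x \<le> f x" if x: "x \<in> \<sigma>" and gens: "\<forall>v\<in>ray_generators \<sigma>. m \<bullet> v \<le> f v" for x
  proof -
    obtain c where c: "\<forall>v\<in>ray_generators \<sigma>. 0 \<le> c v" "x = (\<Sum>v\<in>ray_generators \<sigma>. c v *\<^sub>R v)"
      using x ray_generators_fan(2)[OF True] unfolding cone_gen_def by blast
    have "m \<bullet> x = (\<Sum>v\<in>ray_generators \<sigma>. c v * (m \<bullet> v))"
      unfolding c(2) by (simp add: inner_sum_right)
    also have "\<dots> \<le> (\<Sum>v\<in>ray_generators \<sigma>. c v * (m\<sigma> \<bullet> v))"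
    proof (intro sum_mono mult_left_mono)
      fix v assume v: "v \<in> ray_generators \<sigma>"
      then show "0 \<le> c v" using c(1) by blast
      have "m \<bullet> v \<le> f v" using gens v by blast
      also have "f v = m\<sigma> \<bullet> v" using m\<sigma> ray_generators_subset[OF True] v by blast
      finally show "m \<bullet> v \<le> m\<sigma> \<bullet> v" .
    qed
    also have "\<dots> = f x"
      unfolding c(2) using m\<sigma> x c(2) by (simp add: inner_sum_right)
    finally show ?thesis .
  qed
  then show ?thesis
    using ray_generators_subset[OF True] True unfolding Sigma_fm_def by blast
qed (simp add: Sigma_fm_def)

lemma moves_into_unique:
  assumes \<rho>1: "\<rho>1 \<in> \<Sigma>" and \<rho>2: "\<rho>2 \<in> \<Sigma>" and mv: "moves_into w \<tau> \<rho>1" "moves_into w \<tau> \<rho>2"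
  shows "\<rho>1 = \<rho>2"
proof -
  \<comment> \<open>for this small \<open>e\<close> the moved point has positive coordinates in both cones, so each contains the other\<close>
  define s where "s \<rho> = (\<Sum>v\<in>ray_generators \<rho>. \<bar>representation (ray_generators \<rho>) w v\<bar>)" for \<rho>
  define e where "e = 1 / (1 + s \<rho>1 + s \<rho>2)"
  have s: "0 \<le> s \<rho>1" "0 \<le> s \<rho>2" unfolding s_def by (simp_all add: sum_nonneg)
  then have e: "0 < e" unfolding e_def by simp
  have small: "\<forall>v\<in>ray_generators \<rho>. e * \<bar>representation (ray_generators \<rho>) w v\<bar> < 1"
    if \<rho>: "\<rho> \<in> {\<rho>1, \<rho>2}" for \<rho>
  proof
    fix v assume v: "v \<in> ray_generators \<rho>"
    have "\<bar>representation (ray_generators \<rho>) w v\<bar> \<le> s \<rho>"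
      unfolding s_def using \<rho> \<rho>1 \<rho>2 v finite_ray_generators by (intro member_le_sum) auto
    also have "s \<rho> < 1 + s \<rho>1 + s \<rho>2" using \<rho> s by auto
    finally show "e * \<bar>representation (ray_generators \<rho>) w v\<bar> < 1"
      unfolding e_def using s by (simp add: field_simps)
  qed
  let ?y = "(\<Sum>v\<in>ray_generators \<tau>. v) + e *\<^sub>R w"
  obtain d1 where d1: "?y = (\<Sum>v\<in>ray_generators \<rho>1. d1 v *\<^sub>R v)" "\<forall>v\<in>ray_generators \<rho>1. 0 < d1 v"
    using moves_into_positive_coordinates[OF independent_ray_generators[OF \<rho>1] mv(1) e] small by blast
  obtain d2 where d2: "?y = (\<Sum>v\<in>ray_generators \<rho>2. d2 v *\<^sub>R v)" "\<forall>v\<in>ray_generators \<rho>2. 0 < d2 v"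
    using moves_into_positive_coordinates[OF independent_ray_generators[OF \<rho>2] mv(2) e] small by blast
  have "?y \<in> \<rho>1" "?y \<in> \<rho>2"
    using positive_combination_in_cone_gen[of "ray_generators \<rho>1" d1]
      positive_combination_in_cone_gen[of "ray_generators \<rho>2" d2]
      d1 d2 ray_generators_fan(2)[OF \<rho>1] ray_generators_fan(2)[OF \<rho>2] by (auto intro: less_imp_le)
  then show ?thesis
    using fan_cone_subset_if_positive_combination[OF \<rho>1 \<rho>2 _ d1(2)]
      fan_cone_subset_if_positive_combination[OF \<rho>2 \<rho>1 _ d2(2)] d1(1) d2(1) by auto
qed

lemma moves_into_of_segment:
  assumes \<rho>0: "\<rho>0 \<in> \<Sigma>" and GP0: "ray_generators \<tau> \<subseteq> ray_generators \<rho>0" and \<delta>: "0 < \<delta>"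
    and y: "(\<Sum>v\<in>ray_generators \<tau>. v) + \<delta> *\<^sub>R w \<in> \<rho>0"
  shows "\<exists>\<rho>\<in>\<Sigma>. moves_into w \<tau> \<rho>"
proof -
  let ?G = "ray_generators \<tau>" and ?P0 = "ray_generators \<rho>0"
  have fP0: "finite ?P0" and iP0: "independent ?P0"
    using finite_ray_generators[OF \<rho>0] independent_ray_generators[OF \<rho>0] .
  obtain b where b: "\<forall>v\<in>?P0. 0 \<le> b v" "(\<Sum>v\<in>?G. v) + \<delta> *\<^sub>R w = (\<Sum>v\<in>?P0. b v *\<^sub>R v)"
    using y ray_generators_fan(2)[OF \<rho>0] unfolding cone_gen_def by blast
  define c where "c v = (b v - (if v \<in> ?G then 1 else 0)) / \<delta>" for v
  have "\<delta> *\<^sub>R w = ((\<Sum>v\<in>?G. v) + \<delta> *\<^sub>R w) - (\<Sum>v\<in>?G. v)"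
    by simp
  also have "\<dots> = (\<Sum>v\<in>?P0. b v *\<^sub>R v) - (\<Sum>v\<in>?P0. (if v \<in> ?G then 1 else 0) *\<^sub>R v)"
    unfolding b(2) using sum_scaleR_indicator_extend[OF fP0 GP0, of "\<lambda>_. 1"] by simp
  also have "\<dots> = \<delta> *\<^sub>R (\<Sum>v\<in>?P0. c v *\<^sub>R v)"
    unfolding c_def using \<delta> by (simp add: scaleR_sum_right sum_subtractf scaleR_diff_left)
  finally have w: "w = (\<Sum>v\<in>?P0. c v *\<^sub>R v)"
    using \<delta> by simp
  define P where "P = {v \<in> ?P0. v \<in> ?G \<or> c v \<noteq> 0}"
  have PP0: "P \<subseteq> ?P0" unfolding P_def by blast
  have \<rho>: "cone_gen P \<in> \<Sigma>" "ray_generators (cone_gen P) = P"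
    using cone_gen_subset_ray_generators[OF \<rho>0 PP0] by auto
  have iP: "independent P" using independent_mono[OF iP0 PP0] .
  have wP: "w = (\<Sum>v\<in>P. c v *\<^sub>R v)"
    unfolding w using fP0 PP0 by (intro sum.mono_neutral_right) (auto simp: P_def)
  have "moves_into w \<tau> (cone_gen P)"
    unfolding moves_into_def nonpos_generators_def \<rho>(2)
  proof (intro conjI subsetI)
    show "v \<in> P" if "v \<in> ?G" for v using that GP0 unfolding P_def by blast
    show "w \<in> span P" unfolding wP by (simp add: span_sum span_scale span_base)
    fix v assume "v \<in> {v \<in> P. representation P w v \<le> 0}"
    then have v: "v \<in> P" "c v \<le> 0"
      using representation_combination[OF iP] wP by auto
    show "v \<in> ?G"
    proof (rule ccontr)
      assume "v \<notin> ?G"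
      then have "c v \<noteq> 0" "0 \<le> c v"
        using v(1) b(1) PP0 \<delta> unfolding P_def c_def by auto
      then show False using v(2) by simp
    qed
  qed
  then show ?thesis using \<rho>(1) by blast
qed

lemma moves_into_exists:
  assumes \<tau>: "\<tau> \<in> \<Sigma>"
  shows "\<exists>\<rho>\<in>\<Sigma>. moves_into w \<tau> \<rho>"
proof -
  let ?x = "\<Sum>v\<in>ray_generators \<tau>. v"
  have "closed \<sigma>" if "\<sigma> \<in> \<Sigma>" for \<sigma>
    using closed_cone_gen[OF finite_ray_generators[OF that]] ray_generators_fan(2)[OF that] by simp
  then obtain \<rho>0 \<delta> where \<rho>0: "\<rho>0 \<in> \<Sigma>" "0 < \<delta>" "?x \<in> \<rho>0" "?x + \<delta> *\<^sub>R w \<in> \<rho>0"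
    using closed_cover_initial_segment[OF finite_fan _ Union_fan, of ?x w] by blast
  have "\<tau> \<subseteq> \<rho>0"
    using fan_cone_subset_if_positive_combination[OF \<tau> \<rho>0(1), of "\<lambda>_. 1"] \<rho>0(3) by simp
  then have "ray_generators \<tau> \<subseteq> ray_generators \<rho>0"
    by (rule ray_generators_mono[OF \<tau> \<rho>0(1)])
  then show ?thesis
    by (rule moves_into_of_segment[OF \<rho>0(1) _ \<rho>0(2,4)])
qed

lemma Sigma_fm_moves_into_eq_image:
  assumes f: "f \<in> PL \<Sigma>" and \<rho>: "\<rho> \<in> \<Sigma>" and w: "w \<in> span (ray_generators \<rho>)"
  shows "{\<tau> \<in> Sigma_fm \<Sigma> f m. moves_into w \<tau> \<rho>}
    = cone_gen ` {G. nonpos_generators w \<rho> \<subseteq> G \<and> G \<subseteq> {v \<in> ray_generators \<rho>. m \<bullet> v \<le> f v}}"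
proof
  show "{\<tau> \<in> Sigma_fm \<Sigma> f m. moves_into w \<tau> \<rho>}
    \<subseteq> cone_gen ` {G. nonpos_generators w \<rho> \<subseteq> G \<and> G \<subseteq> {v \<in> ray_generators \<rho>. m \<bullet> v \<le> f v}}"
  proof
    fix \<tau> assume "\<tau> \<in> {\<tau> \<in> Sigma_fm \<Sigma> f m. moves_into w \<tau> \<rho>}"
    then have \<tau>: "\<tau> \<in> \<Sigma>" "\<forall>v\<in>ray_generators \<tau>. m \<bullet> v \<le> f v" "moves_into w \<tau> \<rho>"
      using Sigma_fm_iff[OF f] by auto
    then have "ray_generators \<tau> \<in> {G. nonpos_generators w \<rho> \<subseteq> G \<and> G \<subseteq> {v \<in> ray_generators \<rho>. m \<bullet> v \<le> f v}}"
      unfolding moves_into_def by blast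
    then show "\<tau> \<in> cone_gen ` {G. nonpos_generators w \<rho> \<subseteq> G \<and> G \<subseteq> {v \<in> ray_generators \<rho>. m \<bullet> v \<le> f v}}"
      by (rule image_eqI[where f = cone_gen, OF ray_generators_fan(2)[OF \<tau>(1), symmetric]])
  qed
  show "cone_gen ` {G. nonpos_generators w \<rho> \<subseteq> G \<and> G \<subseteq> {v \<in> ray_generators \<rho>. m \<bullet> v \<le> f v}}
    \<subseteq> {\<tau> \<in> Sigma_fm \<Sigma> f m. moves_into w \<tau> \<rho>}"
  proof
    fix \<tau> assume "\<tau> \<in> cone_gen ` {G. nonpos_generators w \<rho> \<subseteq> G \<and> G \<subseteq> {v \<in> ray_generators \<rho>. m \<bullet> v \<le> f v}}"
    then obtain G where G: "nonpos_generators w \<rho> \<subseteq> G" "G \<subseteq> {v \<in> ray_generators \<rho>. m \<bullet> v \<le> f v}"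
      and \<tau>: "\<tau> = cone_gen G"
      by blast
    then have GP: "G \<subseteq> ray_generators \<rho>" by blast
    show "\<tau> \<in> {\<tau> \<in> Sigma_fm \<Sigma> f m. moves_into w \<tau> \<rho>}"
      using cone_gen_subset_ray_generators[OF \<rho> GP] G w \<tau>
      unfolding Sigma_fm_iff[OF f] moves_into_def by auto
  qed
qed

lemma sum_Sigma_fm_moves_into:
  assumes f: "f \<in> PL \<Sigma>" and \<rho>: "\<rho> \<in> \<Sigma>" and w: "w \<in> span (ray_generators \<rho>)"
  shows "(\<Sum>\<tau> \<in> {\<tau> \<in> Sigma_fm \<Sigma> f m. moves_into w \<tau> \<rho>}. (-1::int) ^ dim \<tau>)
    = (\<Sum>G | nonpos_generators w \<rho> \<subseteq> G \<and> G \<subseteq> {v \<in> ray_generators \<rho>. m \<bullet> v \<le> f v}. (-1) ^ card G)"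
proof -
  let ?I = "{G. nonpos_generators w \<rho> \<subseteq> G \<and> G \<subseteq> {v \<in> ray_generators \<rho>. m \<bullet> v \<le> f v}}"
  have sub: "G \<subseteq> ray_generators \<rho>" if "G \<in> ?I" for G
    using that by blast
  have "inj_on cone_gen ?I"
  proof (rule inj_onI)
    fix G1 G2 assume G: "G1 \<in> ?I" "G2 \<in> ?I" "cone_gen G1 = cone_gen G2"
    have "G1 = ray_generators (cone_gen G1)"
      using cone_gen_subset_ray_generators(2)[OF \<rho> sub[OF G(1)]] by simp
    also have "\<dots> = G2"
      using cone_gen_subset_ray_generators(2)[OF \<rho> sub[OF G(2)]] G(3) by simp
    finally show "G1 = G2" .
  qed
  then have "(\<Sum>\<tau> \<in> cone_gen ` ?I. (-1::int) ^ dim \<tau>) = (\<Sum>G\<in>?I. (-1) ^ dim (cone_gen G))"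
    by (rule sum.reindex[unfolded comp_def])
  also have "\<dots> = (\<Sum>G\<in>?I. (-1) ^ card G)"
  proof (rule sum.cong[OF refl])
    fix G assume "G \<in> ?I"
    then show "(-1::int) ^ dim (cone_gen G) = (-1) ^ card G"
      using dim_fan_cone cone_gen_subset_ray_generators[OF \<rho> sub] by simp
  qed
  finally show ?thesis
    unfolding Sigma_fm_moves_into_eq_image[OF assms] .
qed

lemma alternating_sum_Sigma_fm_eq_0:
  assumes f: "f \<in> PL \<Sigma>"
    and large: "\<forall>\<rho>\<in>\<Sigma>. \<exists>m'. (\<forall>x\<in>\<rho>. f x = m' \<bullet> x) \<and> norm m' < norm m"
  shows "(\<Sum>\<sigma>\<in>Sigma_fm \<Sigma> f m. (-1::int) ^ dim \<sigma>) = 0"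
proof -
  have "finite (Sigma_fm \<Sigma> f m)"
    using finite_fan unfolding Sigma_fm_def by simp
  moreover have "\<forall>\<tau>\<in>Sigma_fm \<Sigma> f m. \<exists>!\<rho>. \<rho> \<in> \<Sigma> \<and> moves_into (- m) \<tau> \<rho>"
    using moves_into_exists moves_into_unique unfolding Sigma_fm_def by blast
  ultimately have "(\<Sum>\<sigma>\<in>Sigma_fm \<Sigma> f m. (-1::int) ^ dim \<sigma>)
      = (\<Sum>\<rho>\<in>\<Sigma>. \<Sum>\<tau> \<in> {\<tau> \<in> Sigma_fm \<Sigma> f m. moves_into (- m) \<tau> \<rho>}. (-1) ^ dim \<tau>)"
    by (rule sum_group_unique[where r = "\<lambda>\<tau> \<rho>. moves_into (- m) \<tau> \<rho>"
          and h = "\<lambda>\<sigma>. (-1::int) ^ dim \<sigma>", OF _ finite_fan, symmetric])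
  also have "\<dots> = 0"
  proof (rule sum.neutral, rule ballI)
    fix \<rho> assume \<rho>: "\<rho> \<in> \<Sigma>"
    show "(\<Sum>\<tau> \<in> {\<tau> \<in> Sigma_fm \<Sigma> f m. moves_into (- m) \<tau> \<rho>}. (-1::int) ^ dim \<tau>) = 0"
    proof (cases "- m \<in> span (ray_generators \<rho>)")
      case True
      obtain m' where m': "\<forall>x\<in>\<rho>. f x = m' \<bullet> x" "norm m' < norm m"
        using large \<rho> by blast
      then have "{v \<in> ray_generators \<rho>. m \<bullet> v \<le> f v} = {v \<in> ray_generators \<rho>. m \<bullet> v \<le> m' \<bullet> v}"
        using ray_generators_subset[OF \<rho>] by auto
      then have "nonpos_generators (- m) \<rho> \<noteq> {v \<in> ray_generators \<rho>. m \<bullet> v \<le> f v}"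
        using nonpos_coordinates_ne_lower_generators[OF independent_ray_generators[OF \<rho>] True m'(2)]
        unfolding nonpos_generators_def by simp
      then show ?thesis
        unfolding sum_Sigma_fm_moves_into[OF f \<rho> True]
        by (intro sum_alternating_subsets_between) (simp add: finite_ray_generators[OF \<rho>])
    next
      case False
      then have "{\<tau> \<in> Sigma_fm \<Sigma> f m. moves_into (- m) \<tau> \<rho>} = {}"
        unfolding moves_into_def by blast
      then show ?thesis by (simp only: sum.empty)
    qed
  qed
  finally show ?thesis .
qed

end

theorem lemma4:
  fixes \<Sigma> :: "(real^'n) set set" and f :: "real^'n \<Rightarrow> real"
  assumes "complete_fan \<Sigma>" and "unimodular_fan \<Sigma>" and "f \<in> PL \<Sigma>"
  shows "finite {m. lattice_pt m \<and> (\<Sum>\<sigma>\<in>Sigma_fm \<Sigma> f m. (-1::int) ^ dim \<sigma>) \<noteq> 0}"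
proof -
  interpret unimodular_complete_fan \<Sigma> using assms(1,2) by unfold_locales
  have "\<forall>\<rho>\<in>\<Sigma>. \<exists>m'. \<forall>x\<in>\<rho>. f x = m' \<bullet> x"
    using assms(3) unfolding PL_def by blast
  from bchoice[OF this] obtain slope where slope: "\<forall>\<rho>\<in>\<Sigma>. \<forall>x\<in>\<rho>. f x = slope \<rho> \<bullet> x"
    by blast
  define K where "K = (\<Sum>\<rho>\<in>\<Sigma>. norm (slope \<rho>))"
  have "norm m \<le> K" if "(\<Sum>\<sigma>\<in>Sigma_fm \<Sigma> f m. (-1::int) ^ dim \<sigma>) \<noteq> 0" for m
  proof (rule ccontr)
    assume "\<not> norm m \<le> K"
    then have "\<forall>\<rho>\<in>\<Sigma>. \<exists>m'. (\<forall>x\<in>\<rho>. f x = m' \<bullet> x) \<and> norm m' < norm m"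
      using slope member_le_sum[of _ \<Sigma> "\<lambda>\<rho>. norm (slope \<rho>)"] finite_fan
      unfolding K_def by fastforce
    then show False
      using alternating_sum_Sigma_fm_eq_0[OF assms(3)] that by blast
  qed
  then have "{m. lattice_pt m \<and> (\<Sum>\<sigma>\<in>Sigma_fm \<Sigma> f m. (-1::int) ^ dim \<sigma>) \<noteq> 0}
      \<subseteq> {m. lattice_pt m \<and> norm m \<le> K}"
    by blast
  then show ?thesis
    by (rule finite_subset[OF _ finite_lattice_points_norm_le])
qed

end
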